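(* For any $f\in\mathcal{C}(I)$ and integers $m,n\ge0$, $$\operatorname{dist}\big(f,\mathcal{R}^\alpha_{mn}(I)\big)\le\operatorname{dist}\big(f,\mathcal{R}_{mn}(I)\big)+\frac{|\alpha|_\infty}{1-|\alpha|_\infty}\|Id-L\|\Big(\operatorname{dist}\big(f,\mathcal{R}_{mn}(I)\big)+\|f\|_\infty\Big).$$
   Context: $I=[x_0,x_N]$ is a compact interval, $\mathcal{C}(I)$ the real continuous functions with sup norm, $\Delta=\{x_0<x_1<\dots<x_N\}$, $N\ge2$, $I_i=[x_{i-1},x_i]$, $L_i(x)=a_ix+b_i$ the affine map of $I$ onto $I_i$ with $L_i(x_0)=x_{i-1}$, $L_i(x_N)=x_i$; $\alpha\in(-1,1)^N$, $|\alpha|_\infty=\max_i|\alpha_i|$. For $f,b\in\mathcal{C}(I)$ with $b(x_0)=f(x_0)$, $b(x_N)=f(x_N)$, $f^\alpha_{\Delta,b}$ is the unique $g\in\mathcal{C}(I)$ with $g(x)=f(x)+\alpha_i(g-b)(L_i^{-1}(x))$ for $x\in I_i$. $L:\mathcal{C}(I)\to\mathcal{C}(I)$ is bounded linear with $(Lf)(x_0)=f(x_0)$, $(Lf)(x_N)=f(x_N)$, and $\mathcal{F}^\alpha_{\Delta,L}(f)=f^\alpha_{\Delta,Lf}$. $\mathcal{P}_k(I)$ is the space of real algebraic polynomials of degree $\le k$; $\mathcal{R}_{mn}(I)=\{p/q:p\in\mathcal{P}_m(I),q\in\mathcal{P}_n(I),q>0\text{ on }I\}$; $\mathcal{R}^\alpha_{mn}(I)=\mathcal{F}^\alpha_{\Delta,L}(\mathcal{R}_{mn}(I))$;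 $\operatorname{dist}(f,S)=\inf\{\|f-s\|_\infty:s\in S\}$. *)

theory Defs
  imports "HOL-Analysis.Analysis" "HOL-Computational_Algebra.Polynomial"
begin

definition Ival :: "(nat \<Rightarrow> real) \<Rightarrow> nat \<Rightarrow> real set" where
  "Ival xs N = {xs 0 .. xs N}"

definition partition :: "(nat \<Rightarrow> real) \<Rightarrow> nat \<Rightarrow> bool" where
  "partition xs N \<longleftrightarrow> 2 \<le> N \<and> (\<forall>i<N. xs i < xs (Suc i))"

definition supnorm :: "real set \<Rightarrow> (real \<Rightarrow> real) \<Rightarrow> real" where
  "supnorm S g = Sup ((\<lambda>t. \<bar>g t\<bar>) ` S)"

text \<open>C(I): continuous real functions on I (only values on I matter).\<close>
definition CI :: "real set \<Rightarrow> (real \<Rightarrow> real) set" where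
  "CI S = {g. continuous_on S g}"

text \<open>Inverse of the affine map L_i of I onto I_i = [x_{i-1}, x_i].\<close>
definition Linv :: "(nat \<Rightarrow> real) \<Rightarrow> nat \<Rightarrow> nat \<Rightarrow> real \<Rightarrow> real" where
  "Linv xs N i y = xs 0 + (y - xs (i - 1)) * (xs N - xs 0) / (xs i - xs (i - 1))"

definition fractal :: "(nat \<Rightarrow> real) \<Rightarrow> nat \<Rightarrow> (nat \<Rightarrow> real) \<Rightarrow> (real \<Rightarrow> real)
    \<Rightarrow> (real \<Rightarrow> real) \<Rightarrow> (real \<Rightarrow> real)" where
  "fractal xs N \<alpha> f b = (THE g. continuous_on (Ival xs N) g
      \<and> (\<forall>i\<in>{1..N}. \<forall>y\<in>{xs (i - 1) .. xs i}.
            g y = f y + \<alpha> i * (g (Linv xs N i y) - b (Linv xs N i y)))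
      \<and> (\<forall>y. y \<notin> Ival xs N \<longrightarrow> g y = 0))"

definition admissible_op :: "(nat \<Rightarrow> real) \<Rightarrow> nat \<Rightarrow> ((real \<Rightarrow> real) \<Rightarrow> (real \<Rightarrow> real)) \<Rightarrow> bool" where
  "admissible_op xs N L \<longleftrightarrow>
     (let I = Ival xs N in
      (\<forall>f\<in>CI I. L f \<in> CI I)
    \<and> (\<forall>f\<in>CI I. \<forall>g\<in>CI I. (\<forall>t\<in>I. f t = g t) \<longrightarrow> (\<forall>t\<in>I. L f t = L g t))
    \<and> (\<forall>f\<in>CI I. \<forall>g\<in>CI I. \<forall>t\<in>I. L (\<lambda>s. f s + g s) t = L f t + L g t)
    \<and> (\<forall>f\<in>CI I. \<forall>c. \<forall>t\<in>I. L (\<lambda>s. c * f s) t = c * L f t)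
    \<and> (\<exists>M. \<forall>f\<in>CI I. supnorm I (L f) \<le> M * supnorm I f)
    \<and> (\<forall>f\<in>CI I. L f (xs 0) = f (xs 0) \<and> L f (xs N) = f (xs N)))"

definition opnorm_IdL :: "real set \<Rightarrow> ((real \<Rightarrow> real) \<Rightarrow> (real \<Rightarrow> real)) \<Rightarrow> real" where
  "opnorm_IdL I L = Sup {supnorm I (\<lambda>t. g t - L g t) | g. g \<in> CI I \<and> supnorm I g \<le> 1}"

definition fractal_op :: "(nat \<Rightarrow> real) \<Rightarrow> nat \<Rightarrow> (nat \<Rightarrow> real)
    \<Rightarrow> ((real \<Rightarrow> real) \<Rightarrow> (real \<Rightarrow> real)) \<Rightarrow> (real \<Rightarrow> real) \<Rightarrow> (real \<Rightarrow> real)" where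
  "fractal_op xs N \<alpha> L f = fractal xs N \<alpha> f (L f)"

definition Rat_fun :: "real set \<Rightarrow> nat \<Rightarrow> nat \<Rightarrow> (real \<Rightarrow> real) set" where
  "Rat_fun I m n = {(\<lambda>t. poly p t / poly q t) | p q.
       degree p \<le> m \<and> degree q \<le> n \<and> (\<forall>t\<in>I. poly q t > 0)}"

definition dist_set :: "real set \<Rightarrow> (real \<Rightarrow> real) \<Rightarrow> (real \<Rightarrow> real) set \<Rightarrow> real" where
  "dist_set I f S = Inf {supnorm I (\<lambda>t. f t - s t) | s. s \<in> S}"

definition alpha_max :: "nat \<Rightarrow> (nat \<Rightarrow> real) \<Rightarrow> real" where
  "alpha_max N \<alpha> = Max ((\<lambda>i. \<bar>\<alpha> i\<bar>) ` {1..N})"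

end

theory Submission
  imports Defs
begin

text \<open>The fractal function \<open>f\<^sup>\<alpha>\<^sub>\<Delta>\<^sub>,\<^sub>b\<close> is the fixed point of the Read--Bajraktarevic operator
  \<open>h \<mapsto> f + \<alpha>\<^sub>i (h - b) \<circ> L\<^sub>i\<^sup>-\<^sup>1\<close>, a contraction of ratio \<open>|\<alpha>|\<^sub>\<infinity>\<close> for the sup norm. Comparing the fixed
  point with the first iterate gives \<open>\<parallel>f\<^sup>\<alpha>\<^sub>\<Delta>\<^sub>,\<^sub>b - f\<parallel> \<le> |\<alpha>|\<^sub>\<infinity> / (1 - |\<alpha>|\<^sub>\<infinity>) \<parallel>f - b\<parallel>\<close>. For a
  rational \<open>r\<close> and \<open>b = L r\<close> this is at most \<open>|\<alpha>|\<^sub>\<infinity> / (1 - |\<alpha>|\<^sub>\<infinity>) \<parallel>Id - L\<parallel> \<parallel>r\<parallel>\<close>, and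
  \<open>\<parallel>r\<parallel> \<le> \<parallel>f\<parallel> + \<parallel>f - r\<parallel>\<close>; taking the infimum over \<open>r\<close> gives the theorem.\<close>

text \<open>Banach's fixed point theorem for operators acting pointwise on functions, with the uniform
  distance on \<open>S\<close>; no metric structure on the function space itself is needed.\<close>
lemma contraction_iterates_converge:
  fixes T :: "('a \<Rightarrow> 'b::complete_space) \<Rightarrow> 'a \<Rightarrow> 'b"
  assumes a: "0 \<le> a" "a < 1" and B: "0 \<le> B" "\<forall>t\<in>S. dist (T h0 t) (h0 t) \<le> B"
    and contr: "\<And>h1 h2 E. \<forall>z\<in>S. dist (h1 z) (h2 z) \<le> E \<Longrightarrow> \<forall>y\<in>S. dist (T h1 y) (T h2 y) \<le> a * E"
  obtains g where "uniform_limit S (\<lambda>k. (T ^^ k) h0) g sequentially"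
    and "\<forall>y\<in>S. T g y = g y" and "\<forall>y\<in>S. dist (g y) (h0 y) \<le> B / (1 - a)"
proof -
  define H where "H k = (T ^^ k) h0" for k
  define C where "C = B / (1 - a)"
  have step: "\<forall>y\<in>S. dist (H (Suc k) y) (H k y) \<le> a ^ k * B" for k
  proof (induction k)
    case 0 then show ?case using B by (simp add: H_def)
  next
    case (Suc k)
    then show ?case using contr[of "H (Suc k)" "H k"] by (simp add: H_def mult.assoc)
  qed
  have far: "dist (H (k + d) y) (H k y) \<le> a ^ k * C" if y: "y \<in> S" for k d y
  proof -
    have "dist (H (k + d) y) (H k y) \<le> (\<Sum>i<d. a ^ (k + i)) * B"
    proof (induction d)
      case (Suc d)
      have "dist (H (k + Suc d) y) (H k y) \<le> dist (H (Suc (k + d)) y) (H (k + d) y) + dist (H (k + d) y) (H k y)"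
        by (simp add: dist_triangle)
      also have "\<dots> \<le> a ^ (k + d) * B + (\<Sum>i<d. a ^ (k + i)) * B"
        using step y Suc by (intro add_mono) auto
      finally show ?case by (simp add: algebra_simps)
    qed simp
    also have "(\<Sum>i<d. a ^ (k + i)) = a ^ k * (1 - a ^ d) / (1 - a)"
      using a by (simp add: power_add sum_distrib_left[symmetric] sum_gp_strict)
    also have "\<dots> * B \<le> a ^ k * C"
    proof -
      have "a ^ k * (1 - a ^ d) \<le> a ^ k" using a by (simp add: mult_left_le)
      then show ?thesis using a B by (simp add: C_def divide_right_mono mult_right_mono)
    qed
    finally show ?thesis .
  qed
  have to0: "(\<lambda>k. a ^ k * C) \<longlonglongrightarrow> 0"
    using a by (intro tendsto_mult_left_zero LIMSEQ_power_zero) auto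
  have "uniformly_Cauchy_on S H"
    unfolding uniformly_Cauchy_on_def
  proof (intro allI impI)
    fix e :: real assume "e > 0"
    then obtain M where M: "\<And>k. k \<ge> M \<Longrightarrow> a ^ k * C < e"
      using order_tendstoD(2)[OF to0] by (auto simp: eventually_sequentially)
    have "dist (H m y) (H n y) < e" if y: "y \<in> S" and "m \<ge> M" "n \<ge> M" for y m n
    proof (cases "m \<le> n")
      case True
      then show ?thesis using far[OF y, of m "n - m"] M[OF \<open>m \<ge> M\<close>] by (simp add: dist_commute)
    next
      case False
      then show ?thesis using far[OF y, of n "m - n"] M[OF \<open>n \<ge> M\<close>] by simp
    qed
    then show "\<exists>M. \<forall>y\<in>S. \<forall>m\<ge>M. \<forall>n\<ge>M. dist (H m y) (H n y) < e" by blast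
  qed
  then obtain g where g: "uniform_limit S H g sequentially"
    using Cauchy_uniformly_convergent by (auto simp: uniformly_convergent_on_def)
  have near: "dist (g y) (H k y) \<le> a ^ k * C" if y: "y \<in> S" for k y
  proof (rule LIMSEQ_le_const2)
    have "(\<lambda>d. H (k + d) y) \<longlonglongrightarrow> g y"
      using LIMSEQ_ignore_initial_segment[OF tendsto_uniform_limitI[OF g y], of k]
      by (simp add: add.commute)
    then show "(\<lambda>d. dist (H (k + d) y) (H k y)) \<longlonglongrightarrow> dist (g y) (H k y)"
      by (intro tendsto_intros)
  qed (use far[OF y] in auto)
  have "T g y = g y" if y: "y \<in> S" for y
  proof (rule LIMSEQ_unique)
    have bound: "dist (H (Suc k) y) (T g y) \<le> a * (a ^ k * C)" for k
      using contr[of g "H k" "a ^ k * C"] near y by (simp add: H_def dist_commute)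
    have lim: "(\<lambda>k. a * (a ^ k * C)) \<longlonglongrightarrow> 0"
      using to0 by (rule tendsto_mult_right_zero)
    show "(\<lambda>k. H (Suc k) y) \<longlonglongrightarrow> T g y"
      by (rule tendsto_dist_iff[THEN iffD2],
          rule tendsto_sandwich[OF always_eventually always_eventually tendsto_const lim])
        (simp_all add: bound)
    show "(\<lambda>k. H (Suc k) y) \<longlonglongrightarrow> g y"
      using LIMSEQ_Suc[OF tendsto_uniform_limitI[OF g y]] .
  qed
  moreover have "\<forall>y\<in>S. dist (g y) (h0 y) \<le> B / (1 - a)"
    using near[of _ 0] by (simp add: H_def C_def)
  ultimately show ?thesis using that[of g] g by (auto simp: H_def[abs_def])
qed

lemma contraction_fixpoints_eq:
  fixes T :: "('a \<Rightarrow> 'b::metric_space) \<Rightarrow> 'a \<Rightarrow> 'b"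
  assumes a: "0 \<le> a" "a < 1"
    and contr: "\<And>h1 h2 E. \<forall>z\<in>S. dist (h1 z) (h2 z) \<le> E \<Longrightarrow> \<forall>y\<in>S. dist (T h1 y) (T h2 y) \<le> a * E"
    and fix1: "\<forall>y\<in>S. T g1 y = g1 y" and fix2: "\<forall>y\<in>S. T g2 y = g2 y"
    and E: "\<forall>z\<in>S. dist (g1 z) (g2 z) \<le> E"
  shows "\<forall>y\<in>S. g1 y = g2 y"
proof
  fix y assume y: "y \<in> S"
  have "\<forall>z\<in>S. dist (g1 z) (g2 z) \<le> a ^ k * E" for k
  proof (induction k)
    case (Suc k)
    then show ?case using contr[of g1 g2 "a ^ k * E"] fix1 fix2 by (simp add: mult.assoc)
  qed (use E in simp)
  moreover have "(\<lambda>k. a ^ k * E) \<longlonglongrightarrow> 0"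
    using a by (intro tendsto_mult_left_zero LIMSEQ_power_zero) auto
  ultimately have "dist (g1 y) (g2 y) \<le> 0"
    using y by (intro LIMSEQ_le_const[where X = "\<lambda>k. a ^ k * E"]) auto
  then show "g1 y = g2 y" by simp
qed

lemma cInf_image_le_affine:
  fixes g h :: "'a \<Rightarrow> real"
  assumes "A \<noteq> {}" "bdd_below (g ` A)" "0 < c" and le: "\<And>x. x \<in> A \<Longrightarrow> g x \<le> c * h x + e"
  shows "Inf (g ` A) \<le> c * Inf (h ` A) + e"
proof -
  have "(Inf (g ` A) - e) / c \<le> h x" if "x \<in> A" for x
  proof -
    have "Inf (g ` A) \<le> g x" using cInf_lower[OF imageI[OF that] assms(2)] .
    with le[OF that] show ?thesis using \<open>0 < c\<close> by (simp add: divide_le_eq algebra_simps)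
  qed
  then have "(Inf (g ` A) - e) / c \<le> Inf (h ` A)" using \<open>A \<noteq> {}\<close> by (intro cInf_greatest) auto
  then show ?thesis using \<open>0 < c\<close> by (simp add: divide_le_eq algebra_simps)
qed

lemma bdd_above_abs_image:
  assumes "compact S" "continuous_on S h"
  shows "bdd_above ((\<lambda>t. \<bar>h t :: real\<bar>) ` S)"
  using compact_continuous_image[OF continuous_on_rabs[OF assms(2)] assms(1)]
  by (simp add: bounded_imp_bdd_above compact_imp_bounded)

lemma abs_le_supnorm: "compact S \<Longrightarrow> continuous_on S h \<Longrightarrow> t \<in> S \<Longrightarrow> \<bar>h t\<bar> \<le> supnorm S h"
  unfolding supnorm_def by (rule cSUP_upper) (auto intro: bdd_above_abs_image)

lemma supnorm_le: "S \<noteq> {} \<Longrightarrow> (\<And>t. t \<in> S \<Longrightarrow> \<bar>h t\<bar> \<le> c) \<Longrightarrow> supnorm S h \<le> c"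
  unfolding supnorm_def by (rule cSUP_least) auto

lemma supnorm_nonneg: "compact S \<Longrightarrow> continuous_on S h \<Longrightarrow> S \<noteq> {} \<Longrightarrow> 0 \<le> supnorm S h"
  using abs_le_supnorm by (meson abs_ge_zero ex_in_conv order_trans)

lemma dist_le_supnorm:
  assumes "compact S" "continuous_on S (\<lambda>t. h1 t - h2 t)"
  shows "\<forall>z\<in>S. dist (h1 z) (h2 z) \<le> supnorm S (\<lambda>t. h1 t - h2 t)"
  using abs_le_supnorm[OF assms] by (simp add: dist_real_def)

lemma continuous_on_Linv: "continuous_on S (Linv xs N i)"
  unfolding Linv_def times_divide_eq_right[symmetric] by (intro continuous_intros)

lemma Linv_left_node: "Linv xs N i (xs (i - 1)) = xs 0"
  by (simp add: Linv_def)

text \<open>On a node shared by two subintervals, the leftmost one is chosen.\<close>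
definition piece_index :: "(nat \<Rightarrow> real) \<Rightarrow> nat \<Rightarrow> real \<Rightarrow> nat" where
  "piece_index xs N y = (LEAST i. 1 \<le> i \<and> y \<le> xs i)"

context
  fixes xs :: "nat \<Rightarrow> real" and N :: nat
  assumes partition: "partition xs N"
begin

lemma partition_strict_mono: "i < j \<Longrightarrow> j \<le> N \<Longrightarrow> xs i < xs j"
proof (induction j)
  case (Suc j)
  then have "xs j < xs (Suc j)" using partition by (auto simp: partition_def)
  with Suc show ?case by (cases "i = j") auto
qed simp

lemma partition_mono: "i \<le> j \<Longrightarrow> j \<le> N \<Longrightarrow> xs i \<le> xs j"
  using partition_strict_mono[of i j] by (cases "i = j") auto

lemma Ival_nonempty: "Ival xs N \<noteq> {}"
  using partition_mono[of 0 N] by (simp add: Ival_def)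

lemma subinterval_subset_Ival: "i \<in> {1..N} \<Longrightarrow> {xs (i - 1) .. xs i} \<subseteq> Ival xs N"
  using partition_mono[of 0 "i - 1"] partition_mono[of i N] by (auto simp: Ival_def)

lemma Linv_right_node: "i \<in> {1..N} \<Longrightarrow> Linv xs N i (xs i) = xs N"
  using partition_strict_mono[of "i - 1" i] by (simp add: Linv_def)

lemma Linv_mem_Ival:
  assumes i: "i \<in> {1..N}" and y: "y \<in> {xs (i - 1) .. xs i}"
  shows "Linv xs N i y \<in> Ival xs N"
proof -
  have "xs (i - 1) < xs i" and "xs 0 < xs N"
    using i partition_strict_mono[of "i - 1" i] partition_strict_mono[of 0 N] partition
    by (auto simp: partition_def)
  define q where "q = (y - xs (i - 1)) / (xs i - xs (i - 1))"
  have "0 \<le> q" "q \<le> 1" using y \<open>xs (i - 1) < xs i\<close> by (auto simp: q_def)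
  then have "0 \<le> (xs N - xs 0) * q" "(xs N - xs 0) * q \<le> xs N - xs 0"
    using \<open>xs 0 < xs N\<close> by (simp_all add: mult_left_le)
  moreover have "Linv xs N i y = xs 0 + (xs N - xs 0) * q"
    by (simp add: Linv_def q_def)
  ultimately show ?thesis by (simp add: Ival_def)
qed

lemma piece_index_mem:
  assumes y: "y \<in> Ival xs N"
  shows "piece_index xs N y \<in> {1..N}" and "y \<in> {xs (piece_index xs N y - 1) .. xs (piece_index xs N y)}"
proof -
  let ?P = "\<lambda>i. 1 \<le> i \<and> y \<le> xs i" and ?j = "piece_index xs N y"
  have PN: "?P N" using partition y by (auto simp: partition_def Ival_def)
  have P: "?P ?j" unfolding piece_index_def by (rule LeastI[of ?P, OF PN])
  have "?j \<le> N" unfolding piece_index_def by (rule Least_le[of ?P, OF PN])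
  with P show "?j \<in> {1..N}" by auto
  have "xs (?j - 1) \<le> y"
  proof (cases "?j = 1")
    case True then show ?thesis using y by (simp add: Ival_def)
  next
    case False
    then have "\<not> ?P (?j - 1)"
      using P unfolding piece_index_def by (intro not_less_Least) auto
    with False P show ?thesis by auto
  qed
  with P show "y \<in> {xs (?j - 1) .. xs ?j}" by auto
qed

lemma piece_index_le: "1 \<le> i \<Longrightarrow> y \<le> xs i \<Longrightarrow> piece_index xs N y \<le> i"
  unfolding piece_index_def by (rule Least_le) auto

lemma Ival_eq_Union_subintervals: "Ival xs N = (\<Union>i\<in>{1..N}. {xs (i - 1) .. xs i})"
  using piece_index_mem subinterval_subset_Ival by blast

lemma alpha_max_bounds:
  assumes "\<forall>i\<in>{1..N}. \<bar>\<alpha> i\<bar> < 1"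
  shows "\<And>i. i \<in> {1..N} \<Longrightarrow> \<bar>\<alpha> i\<bar> \<le> alpha_max N \<alpha>" and "0 \<le> alpha_max N \<alpha>" and "alpha_max N \<alpha> < 1"
proof -
  have "{1..N} \<noteq> {}" using partition by (auto simp: partition_def)
  then have "alpha_max N \<alpha> \<in> (\<lambda>i. \<bar>\<alpha> i\<bar>) ` {1..N}" unfolding alpha_max_def by (intro Max_in) auto
  with assms show "0 \<le> alpha_max N \<alpha>" "alpha_max N \<alpha> < 1" by auto
  show "\<And>i. i \<in> {1..N} \<Longrightarrow> \<bar>\<alpha> i\<bar> \<le> alpha_max N \<alpha>" unfolding alpha_max_def by auto
qed

end

definition RB_op :: "(nat \<Rightarrow> real) \<Rightarrow> nat \<Rightarrow> (nat \<Rightarrow> real) \<Rightarrow> (real \<Rightarrow> real) \<Rightarrow> (real \<Rightarrow> real)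
    \<Rightarrow> (real \<Rightarrow> real) \<Rightarrow> real \<Rightarrow> real" where
  "RB_op xs N \<alpha> f b h y = f y + \<alpha> (piece_index xs N y)
     * (h (Linv xs N (piece_index xs N y) y) - b (Linv xs N (piece_index xs N y) y))"

definition is_fractal :: "(nat \<Rightarrow> real) \<Rightarrow> nat \<Rightarrow> (nat \<Rightarrow> real) \<Rightarrow> (real \<Rightarrow> real)
    \<Rightarrow> (real \<Rightarrow> real) \<Rightarrow> (real \<Rightarrow> real) \<Rightarrow> bool" where
  "is_fractal xs N \<alpha> f b g \<longleftrightarrow> continuous_on (Ival xs N) g
      \<and> (\<forall>i\<in>{1..N}. \<forall>y\<in>{xs (i - 1) .. xs i}.
            g y = f y + \<alpha> i * (g (Linv xs N i y) - b (Linv xs N i y)))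
      \<and> (\<forall>y. y \<notin> Ival xs N \<longrightarrow> g y = 0)"

context
  fixes xs :: "nat \<Rightarrow> real" and N :: nat and \<alpha> :: "nat \<Rightarrow> real" and f b :: "real \<Rightarrow> real"
  assumes partition: "partition xs N" and alpha: "\<forall>i\<in>{1..N}. \<bar>\<alpha> i\<bar> < 1"
    and f_cont: "continuous_on (Ival xs N) f" and b_cont: "continuous_on (Ival xs N) b"
    and b_left: "b (xs 0) = f (xs 0)" and b_right: "b (xs N) = f (xs N)"
begin

text \<open>The choice made by \<open>piece_index\<close> at interior nodes is irrelevant as soon as
  \<open>h\<close> agrees with \<open>b\<close> at the endpoints of \<open>I\<close>.\<close>
lemma RB_op_subinterval:
  assumes i: "i \<in> {1..N}" and y: "y \<in> {xs (i - 1) .. xs i}"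
    and h_left: "h (xs 0) = b (xs 0)" and h_right: "h (xs N) = b (xs N)"
  shows "RB_op xs N \<alpha> f b h y = f y + \<alpha> i * (h (Linv xs N i y) - b (Linv xs N i y))"
proof -
  define j where "j = piece_index xs N y"
  have j: "j \<in> {1..N}" "y \<in> {xs (j - 1) .. xs j}"
    using piece_index_mem[OF partition] subinterval_subset_Ival[OF partition i] y by (auto simp: j_def)
  have "j \<le> i" unfolding j_def using i y by (intro piece_index_le[OF partition]) auto
  show ?thesis
  proof (cases "j = i")
    case True then show ?thesis by (simp add: RB_op_def j_def)
  next
    case False
    with \<open>j \<le> i\<close> have "xs j \<le> xs (i - 1)" using i by (intro partition_mono[OF partition]) auto
    then have "y = xs j" "y = xs (i - 1)" using j y by auto
    then have "Linv xs N j y = xs N" "Linv xs N i y = xs 0"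
      using Linv_right_node[OF partition j(1)] Linv_left_node[of xs N i] by simp_all
    then show ?thesis using h_left h_right by (simp add: RB_op_def j_def[symmetric])
  qed
qed

lemma RB_op_continuous:
  assumes h_cont: "continuous_on (Ival xs N) h"
    and h_left: "h (xs 0) = b (xs 0)" and h_right: "h (xs N) = b (xs N)"
  shows "continuous_on (Ival xs N) (RB_op xs N \<alpha> f b h)"
  unfolding Ival_eq_Union_subintervals[OF partition]
proof (rule continuous_on_closed_Union)
  fix i assume i: "i \<in> {1..N}"
  have Linv_image: "Linv xs N i ` {xs (i - 1) .. xs i} \<subseteq> Ival xs N"
    using Linv_mem_Ival[OF partition i] by auto
  have "continuous_on {xs (i - 1) .. xs i} (\<lambda>y. f y + \<alpha> i * (h (Linv xs N i y) - b (Linv xs N i y)))"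
    using continuous_on_subset[OF f_cont subinterval_subset_Ival[OF partition i]]
      continuous_on_compose2[OF h_cont continuous_on_Linv Linv_image]
      continuous_on_compose2[OF b_cont continuous_on_Linv Linv_image]
    by (intro continuous_intros)
  then show "continuous_on {xs (i - 1) .. xs i} (RB_op xs N \<alpha> f b h)"
    by (rule continuous_on_eq) (use RB_op_subinterval[OF i _ h_left h_right] in auto)
qed auto

lemma RB_op_endpoints:
  assumes h_left: "h (xs 0) = b (xs 0)" and h_right: "h (xs N) = b (xs N)"
  shows "RB_op xs N \<alpha> f b h (xs 0) = b (xs 0)" and "RB_op xs N \<alpha> f b h (xs N) = b (xs N)"
proof -
  have ends: "1 \<in> {1..N}" "N \<in> {1..N}" using partition by (auto simp: partition_def)
  have "xs 0 \<in> {xs (1 - 1) .. xs 1}" "xs N \<in> {xs (N - 1) .. xs N}"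
    using partition_mono[OF partition, of 0 1] partition_mono[OF partition, of "N - 1" N] ends by auto
  then show "RB_op xs N \<alpha> f b h (xs 0) = b (xs 0)" "RB_op xs N \<alpha> f b h (xs N) = b (xs N)"
    using RB_op_subinterval[OF ends(1) _ h_left h_right] RB_op_subinterval[OF ends(2) _ h_left h_right]
      Linv_left_node[of xs N 1] Linv_right_node[OF partition ends(2)] h_left h_right b_left b_right
    by auto
qed

lemma RB_op_contraction:
  assumes "\<forall>z\<in>Ival xs N. dist (h1 z) (h2 z) \<le> E"
  shows "\<forall>y\<in>Ival xs N. dist (RB_op xs N \<alpha> f b h1 y) (RB_op xs N \<alpha> f b h2 y) \<le> alpha_max N \<alpha> * E"
proof
  fix y assume y: "y \<in> Ival xs N"
  define j where "j = piece_index xs N y"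
  define z where "z = Linv xs N j y"
  have j: "j \<in> {1..N}" "y \<in> {xs (j - 1) .. xs j}" using piece_index_mem[OF partition y] by (auto simp: j_def)
  have "dist (RB_op xs N \<alpha> f b h1 y) (RB_op xs N \<alpha> f b h2 y) = \<bar>\<alpha> j\<bar> * dist (h1 z) (h2 z)"
    by (simp add: RB_op_def j_def[symmetric] z_def[symmetric] dist_real_def algebra_simps abs_mult[symmetric])
  also have "\<dots> \<le> alpha_max N \<alpha> * E"
    using alpha_max_bounds[OF partition alpha] j assms Linv_mem_Ival[OF partition j] by (intro mult_mono) (auto simp: z_def)
  finally show "dist (RB_op xs N \<alpha> f b h1 y) (RB_op xs N \<alpha> f b h2 y) \<le> alpha_max N \<alpha> * E" .
qed

lemma is_fractal_fixpoint:
  assumes "is_fractal xs N \<alpha> f b g"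
  shows "\<forall>y\<in>Ival xs N. RB_op xs N \<alpha> f b g y = g y"
proof
  fix y assume "y \<in> Ival xs N"
  from piece_index_mem[OF partition this] assms
  show "RB_op xs N \<alpha> f b g y = g y" unfolding is_fractal_def RB_op_def by simp
qed

lemma is_fractal_unique:
  assumes g1: "is_fractal xs N \<alpha> f b g1" and g2: "is_fractal xs N \<alpha> f b g2"
  shows "g1 = g2"
proof
  fix y
  have "continuous_on (Ival xs N) (\<lambda>t. g1 t - g2 t)"
    using g1 g2 by (simp add: is_fractal_def continuous_on_diff)
  then have E: "\<forall>z\<in>Ival xs N. dist (g1 z) (g2 z) \<le> supnorm (Ival xs N) (\<lambda>t. g1 t - g2 t)"
    by (intro dist_le_supnorm) (simp add: Ival_def)
  have "\<forall>y\<in>Ival xs N. g1 y = g2 y"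
    using alpha_max_bounds(2,3)[OF partition alpha] RB_op_contraction
      is_fractal_fixpoint[OF g1] is_fractal_fixpoint[OF g2] E
    by (rule contraction_fixpoints_eq[where T = "RB_op xs N \<alpha> f b"])
  then show "g1 y = g2 y" using g1 g2 by (cases "y \<in> Ival xs N") (auto simp: is_fractal_def)
qed

lemma RB_op_iterates:
  "continuous_on (Ival xs N) ((RB_op xs N \<alpha> f b ^^ k) f)
   \<and> (RB_op xs N \<alpha> f b ^^ k) f (xs 0) = b (xs 0) \<and> (RB_op xs N \<alpha> f b ^^ k) f (xs N) = b (xs N)"
proof (induction k)
  case (Suc k)
  then show ?case
    using RB_op_continuous[of "(RB_op xs N \<alpha> f b ^^ k) f"] RB_op_endpoints[of "(RB_op xs N \<alpha> f b ^^ k) f"]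
    by simp
qed (use f_cont b_left b_right in simp)

lemma is_fractal_exists:
  obtains g where "is_fractal xs N \<alpha> f b g"
    and "\<forall>y\<in>Ival xs N. \<bar>g y - f y\<bar>
           \<le> alpha_max N \<alpha> / (1 - alpha_max N \<alpha>) * supnorm (Ival xs N) (\<lambda>t. f t - b t)"
proof -
  let ?I = "Ival xs N" and ?a = "alpha_max N \<alpha>" and ?T = "RB_op xs N \<alpha> f b"
  have I: "compact ?I" "?I \<noteq> {}" using Ival_nonempty[OF partition] by (auto simp: Ival_def)
  have fb: "continuous_on ?I (\<lambda>t. f t - b t)" using f_cont b_cont by (intro continuous_intros)
  then have fb_le: "\<forall>z\<in>?I. dist (f z) (b z) \<le> supnorm ?I (\<lambda>t. f t - b t)"
    using dist_le_supnorm[OF I(1)] by blast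
  have "?T b = f" by (simp add: RB_op_def fun_eq_iff)
  then have "\<forall>t\<in>?I. dist (?T f t) (f t) \<le> ?a * supnorm ?I (\<lambda>t. f t - b t)"
    using RB_op_contraction[OF fb_le] by simp
  moreover have "0 \<le> ?a * supnorm ?I (\<lambda>t. f t - b t)"
    using alpha_max_bounds[OF partition alpha] supnorm_nonneg[OF I(1) fb I(2)] by simp
  ultimately obtain g0 where g0: "uniform_limit ?I (\<lambda>k. (?T ^^ k) f) g0 sequentially"
    "\<forall>y\<in>?I. ?T g0 y = g0 y" "\<forall>y\<in>?I. dist (g0 y) (f y) \<le> ?a * supnorm ?I (\<lambda>t. f t - b t) / (1 - ?a)"
    using contraction_iterates_converge[where T = ?T and S = ?I, OF _ _ _ _ RB_op_contraction]
      alpha_max_bounds(2,3)[OF partition alpha]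
    by blast
  have g0_cont: "continuous_on ?I g0"
    using RB_op_iterates by (intro uniform_limit_theorem[OF _ g0(1)]) auto
  have "g0 (xs 0) = b (xs 0)" "g0 (xs N) = b (xs N)"
    using RB_op_iterates I(2) tendsto_uniform_limitI[OF g0(1), of "xs 0"]
      tendsto_uniform_limitI[OF g0(1), of "xs N"]
    by (auto simp: Ival_def LIMSEQ_const_iff)
  define g where "g y = (if y \<in> ?I then g0 y else 0)" for y
  have "is_fractal xs N \<alpha> f b g"
    unfolding is_fractal_def
  proof (intro conjI ballI allI impI)
    show "continuous_on ?I g" using g0_cont by (rule continuous_on_eq) (simp add: g_def)
  next
    fix i y assume i: "i \<in> {1..N}" and y: "y \<in> {xs (i - 1) .. xs i}"
    then have "y \<in> ?I" "Linv xs N i y \<in> ?I"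
      using subinterval_subset_Ival[OF partition i] Linv_mem_Ival[OF partition i y] by auto
    then show "g y = f y + \<alpha> i * (g (Linv xs N i y) - b (Linv xs N i y))"
      using g0(2) RB_op_subinterval[OF i y \<open>g0 (xs 0) = b (xs 0)\<close> \<open>g0 (xs N) = b (xs N)\<close>]
      by (simp add: g_def)
  qed (simp add: g_def)
  moreover have "\<forall>y\<in>?I. \<bar>g y - f y\<bar> \<le> ?a / (1 - ?a) * supnorm ?I (\<lambda>t. f t - b t)"
    using g0(3) by (simp add: g_def dist_real_def)
  ultimately show ?thesis by (rule that)
qed

lemma fractal_eqI: "is_fractal xs N \<alpha> f b g \<Longrightarrow> fractal xs N \<alpha> f b = g"
  unfolding fractal_def is_fractal_def[symmetric]
  by (rule the_equality) (auto intro: is_fractal_unique)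

lemma is_fractal_fractal: "is_fractal xs N \<alpha> f b (fractal xs N \<alpha> f b)"
  using is_fractal_exists fractal_eqI by metis

lemma abs_fractal_minus_le:
  "y \<in> Ival xs N \<Longrightarrow> \<bar>fractal xs N \<alpha> f b y - f y\<bar>
     \<le> alpha_max N \<alpha> / (1 - alpha_max N \<alpha>) * supnorm (Ival xs N) (\<lambda>t. f t - b t)"
  using is_fractal_exists fractal_eqI by metis

end

lemma bdd_above_opnorm_IdL_set:
  assumes S: "compact S" "S \<noteq> {}" and maps: "\<forall>g\<in>CI S. L g \<in> CI S"
    and bounded: "\<forall>g\<in>CI S. supnorm S (L g) \<le> M * supnorm S g"
  shows "bdd_above {supnorm S (\<lambda>t. g t - L g t) | g. g \<in> CI S \<and> supnorm S g \<le> 1}"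
proof (rule bdd_aboveI, safe)
  fix g assume g: "g \<in> CI S" "supnorm S g \<le> 1"
  have cont: "continuous_on S g" "continuous_on S (L g)" using g maps by (auto simp: CI_def)
  have "supnorm S (L g) \<le> M * supnorm S g" using bounded g by blast
  also have "\<dots> \<le> \<bar>M\<bar>"
    using supnorm_nonneg[OF S(1) cont(1) S(2)] g(2)
    by (intro order_trans[OF mult_right_mono[OF abs_ge_self] mult_left_le]) auto
  finally have "supnorm S (L g) \<le> \<bar>M\<bar>" .
  then show "supnorm S (\<lambda>t. g t - L g t) \<le> 1 + \<bar>M\<bar>"
    using abs_le_supnorm[OF S(1) cont(1)] abs_le_supnorm[OF S(1) cont(2)] g(2)
    by (intro supnorm_le[OF S(2)]) (smt (verit))
qed

lemma opnorm_IdL_nonneg: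
  assumes S: "compact S" "S \<noteq> {}" and maps: "\<forall>g\<in>CI S. L g \<in> CI S"
    and bounded: "\<forall>g\<in>CI S. supnorm S (L g) \<le> M * supnorm S g"
  shows "0 \<le> opnorm_IdL S L"
proof -
  have zero: "(\<lambda>_. 0) \<in> CI S" "supnorm S (\<lambda>_. 0) \<le> 1"
    using supnorm_le[OF S(2), of "\<lambda>_. 0"] by (simp_all add: CI_def)
  then have "continuous_on S (L (\<lambda>_. 0))" using maps by (simp add: CI_def)
  then have "continuous_on S (\<lambda>t. 0 - L (\<lambda>_. 0) t)" by (rule continuous_on_diff[OF continuous_on_const])
  then have "0 \<le> supnorm S (\<lambda>t. 0 - L (\<lambda>_. 0) t)" by (rule supnorm_nonneg[OF S(1) _ S(2)])
  also have "\<dots> \<le> opnorm_IdL S L"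
    unfolding opnorm_IdL_def using bdd_above_opnorm_IdL_set[OF assms]
    by (rule cSup_upper[rotated], intro CollectI exI[of _ "\<lambda>_. 0"]) (simp add: zero)
  finally show ?thesis .
qed

text \<open>Scaling g by slightly more than its norm avoids a case split on whether that norm vanishes.\<close>
lemma supnorm_diff_le_opnorm_IdL:
  assumes S: "compact S" "S \<noteq> {}" and maps: "\<forall>g\<in>CI S. L g \<in> CI S"
    and bounded: "\<forall>g\<in>CI S. supnorm S (L g) \<le> M * supnorm S g"
    and homogeneous: "\<forall>g\<in>CI S. \<forall>c. \<forall>t\<in>S. L (\<lambda>s. c * g s) t = c * L g t"
    and g: "g \<in> CI S"
  shows "supnorm S (\<lambda>t. g t - L g t) \<le> opnorm_IdL S L * supnorm S g"
proof (rule field_le_epsilon)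
  fix e :: real assume "0 < e"
  define K where "K = opnorm_IdL S L"
  define s where "s = supnorm S g"
  define r where "r = s + e / (K + 1)"
  have g_cont: "continuous_on S g" using g by (simp add: CI_def)
  have "0 \<le> K" unfolding K_def by (rule opnorm_IdL_nonneg[OF S maps bounded])
  moreover have "0 \<le> s" unfolding s_def by (rule supnorm_nonneg[OF S(1) g_cont S(2)])
  moreover have "0 < e / (K + 1)" using \<open>0 \<le> K\<close> \<open>0 < e\<close> by simp
  ultimately have "0 < r" "s \<le> r" by (simp_all add: r_def)
  define h where "h = (\<lambda>t. (1 / r) * g t)"
  have h: "h \<in> CI S" unfolding CI_def h_def using continuous_on_mult_left[OF g_cont] by blast
  have "supnorm S h \<le> 1"
  proof (rule supnorm_le[OF S(2)])
    fix t assume "t \<in> S"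
    then have "\<bar>g t\<bar> \<le> r" using abs_le_supnorm[OF S(1) g_cont] \<open>s \<le> r\<close> by (force simp: s_def)
    then show "\<bar>h t\<bar> \<le> 1" using \<open>0 < r\<close> by (simp add: h_def abs_mult)
  qed
  then have h_le: "supnorm S (\<lambda>t. h t - L h t) \<le> K"
    unfolding K_def opnorm_IdL_def using h bdd_above_opnorm_IdL_set[OF S maps bounded]
    by (intro cSup_upper) auto
  have "supnorm S (\<lambda>t. g t - L g t) \<le> r * K"
  proof (rule supnorm_le[OF S(2)])
    fix t assume t: "t \<in> S"
    have "L h t = (1 / r) * L g t" using homogeneous g t unfolding h_def by blast
    then have "g t - L g t = r * (h t - L h t)" using \<open>0 < r\<close> by (simp add: h_def field_simps)
    moreover have "continuous_on S (\<lambda>t. h t - L h t)"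
      using h maps by (simp add: CI_def continuous_on_diff)
    ultimately show "\<bar>g t - L g t\<bar> \<le> r * K"
      using abs_le_supnorm[OF S(1) _ t] h_le \<open>0 < r\<close>
      by (simp add: abs_mult) (meson mult_left_mono order_trans less_imp_le)
  qed
  also have "r * K \<le> K * s + e"
    using \<open>0 \<le> K\<close> \<open>0 < e\<close> by (simp add: r_def field_simps)
  finally show "supnorm S (\<lambda>t. g t - L g t) \<le> opnorm_IdL S L * supnorm S g + e"
    by (simp add: K_def s_def)
qed

lemma continuous_on_Rat_fun: "r \<in> Rat_fun S m n \<Longrightarrow> continuous_on S r"
  unfolding Rat_fun_def
  by (auto intro!: continuous_on_divide continuous_on_poly continuous_on_id simp: less_imp_neq[symmetric])

lemma zero_in_Rat_fun: "(\<lambda>_. 0) \<in> Rat_fun S m n"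
  unfolding Rat_fun_def by (rule CollectI, rule exI[of _ 0], rule exI[of _ 1]) auto

lemma admissible_opD:
  assumes "admissible_op xs N L"
  shows "\<forall>g\<in>CI (Ival xs N). L g \<in> CI (Ival xs N)"
    and "\<forall>g\<in>CI (Ival xs N). \<forall>c. \<forall>t\<in>Ival xs N. L (\<lambda>s. c * g s) t = c * L g t"
    and "\<exists>M. \<forall>g\<in>CI (Ival xs N). supnorm (Ival xs N) (L g) \<le> M * supnorm (Ival xs N) g"
    and "g \<in> CI (Ival xs N) \<Longrightarrow> L g (xs 0) = g (xs 0) \<and> L g (xs N) = g (xs N)"
  using assms unfolding admissible_op_def Let_def by blast+

lemma admissible_op_opnorm_IdL:
  assumes partition: "partition xs N" and L: "admissible_op xs N L"
  shows "0 \<le> opnorm_IdL (Ival xs N) L"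
    and "g \<in> CI (Ival xs N) \<Longrightarrow>
      supnorm (Ival xs N) (\<lambda>t. g t - L g t) \<le> opnorm_IdL (Ival xs N) L * supnorm (Ival xs N) g"
proof -
  have I: "compact (Ival xs N)" "Ival xs N \<noteq> {}" using Ival_nonempty[OF partition] by (auto simp: Ival_def)
  obtain M where "\<forall>g\<in>CI (Ival xs N). supnorm (Ival xs N) (L g) \<le> M * supnorm (Ival xs N) g"
    using admissible_opD(3)[OF L] by blast
  with I admissible_opD(1,2)[OF L]
  show "0 \<le> opnorm_IdL (Ival xs N) L"
    and "g \<in> CI (Ival xs N) \<Longrightarrow>
      supnorm (Ival xs N) (\<lambda>t. g t - L g t) \<le> opnorm_IdL (Ival xs N) L * supnorm (Ival xs N) g"
    by (blast intro: opnorm_IdL_nonneg supnorm_diff_le_opnorm_IdL)+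
qed

lemma fractal_op_approximation:
  assumes partition: "partition xs N" and alpha: "\<forall>i\<in>{1..N}. \<bar>\<alpha> i\<bar> < 1"
    and L: "admissible_op xs N L" and f: "f \<in> CI (Ival xs N)" and r: "r \<in> CI (Ival xs N)"
  defines "k \<equiv> alpha_max N \<alpha> / (1 - alpha_max N \<alpha>) * opnorm_IdL (Ival xs N) L"
  shows "continuous_on (Ival xs N) (fractal_op xs N \<alpha> L r)"
    and "supnorm (Ival xs N) (\<lambda>t. f t - fractal_op xs N \<alpha> L r t)
      \<le> (1 + k) * supnorm (Ival xs N) (\<lambda>t. f t - r t) + k * supnorm (Ival xs N) f"
proof -
  let ?I = "Ival xs N" and ?a = "alpha_max N \<alpha>" and ?F = "fractal_op xs N \<alpha> L r"
  have I: "compact ?I" "?I \<noteq> {}" using Ival_nonempty[OF partition] by (auto simp: Ival_def)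
  have Lr: "L r \<in> CI ?I" using admissible_opD(1)[OF L] r by blast
  have cont: "continuous_on ?I f" "continuous_on ?I r" "continuous_on ?I (L r)"
    "continuous_on ?I (\<lambda>t. f t - r t)"
    using f r Lr by (simp_all add: CI_def continuous_on_diff)
  have ends: "L r (xs 0) = r (xs 0)" "L r (xs N) = r (xs N)" using admissible_opD(4)[OF L r] by simp_all
  show "continuous_on ?I ?F"
    using is_fractal_fractal[OF partition alpha cont(2,3) ends] by (simp add: fractal_op_def is_fractal_def)
  have "0 \<le> ?a" "?a < 1" using alpha_max_bounds[OF partition alpha] by auto
  then have "0 \<le> k" using admissible_op_opnorm_IdL(1)[OF partition L] by (simp add: k_def)
  have r_norm: "supnorm ?I r \<le> supnorm ?I f + supnorm ?I (\<lambda>t. f t - r t)"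
  proof (rule supnorm_le[OF I(2)])
    fix t assume t: "t \<in> ?I"
    show "\<bar>r t\<bar> \<le> supnorm ?I f + supnorm ?I (\<lambda>t. f t - r t)"
      using abs_le_supnorm[OF I(1) cont(1) t] abs_le_supnorm[OF I(1) cont(4) t] by linarith
  qed
  have "\<bar>f t - ?F t\<bar> \<le> supnorm ?I (\<lambda>t. f t - r t) + k * (supnorm ?I f + supnorm ?I (\<lambda>t. f t - r t))"
    if t: "t \<in> ?I" for t
  proof -
    have "\<bar>f t - ?F t\<bar> \<le> \<bar>f t - r t\<bar> + \<bar>?F t - r t\<bar>" by linarith
    also have "\<dots> \<le> supnorm ?I (\<lambda>t. f t - r t) + ?a / (1 - ?a) * supnorm ?I (\<lambda>t. r t - L r t)"
      using abs_le_supnorm[OF I(1) cont(4) t] abs_fractal_minus_le[OF partition alpha cont(2,3) ends t]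
      by (simp add: fractal_op_def)
    also have "\<dots> \<le> supnorm ?I (\<lambda>t. f t - r t) + k * supnorm ?I r"
      using mult_left_mono[OF admissible_op_opnorm_IdL(2)[OF partition L r], of "?a / (1 - ?a)"]
        \<open>0 \<le> ?a\<close> \<open>?a < 1\<close>
      by (simp add: k_def mult.assoc)
    also have "\<dots> \<le> supnorm ?I (\<lambda>t. f t - r t) + k * (supnorm ?I f + supnorm ?I (\<lambda>t. f t - r t))"
      using mult_left_mono[OF r_norm \<open>0 \<le> k\<close>] by simp
    finally show ?thesis .
  qed
  then show "supnorm ?I (\<lambda>t. f t - ?F t) \<le> (1 + k) * supnorm ?I (\<lambda>t. f t - r t) + k * supnorm ?I f"
    by (intro supnorm_le[OF I(2)]) (simp add: algebra_simps)
qed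

theorem mainTheorem8:
  fixes xs :: "nat \<Rightarrow> real" and N :: nat and \<alpha> :: "nat \<Rightarrow> real"
    and L :: "(real \<Rightarrow> real) \<Rightarrow> (real \<Rightarrow> real)" and f :: "real \<Rightarrow> real" and m n :: nat
  assumes "partition xs N"
    and "\<forall>i\<in>{1..N}. \<bar>\<alpha> i\<bar> < 1"
    and "admissible_op xs N L"
    and "f \<in> CI (Ival xs N)"
  shows "dist_set (Ival xs N) f (fractal_op xs N \<alpha> L ` Rat_fun (Ival xs N) m n)
     \<le> dist_set (Ival xs N) f (Rat_fun (Ival xs N) m n)
       + alpha_max N \<alpha> / (1 - alpha_max N \<alpha>) * opnorm_IdL (Ival xs N) L
         * (dist_set (Ival xs N) f (Rat_fun (Ival xs N) m n) + supnorm (Ival xs N) f)"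
proof -
  let ?I = "Ival xs N" and ?R = "Rat_fun (Ival xs N) m n" and ?F = "fractal_op xs N \<alpha> L"
  define k where "k = alpha_max N \<alpha> / (1 - alpha_max N \<alpha>) * opnorm_IdL ?I L"
  have I: "compact ?I" "?I \<noteq> {}" using Ival_nonempty[OF assms(1)] by (auto simp: Ival_def)
  have R: "\<And>r. r \<in> ?R \<Longrightarrow> r \<in> CI ?I" using continuous_on_Rat_fun by (auto simp: CI_def)
  note approx = fractal_op_approximation[OF assms R, folded k_def]
  have "0 \<le> k"
    using alpha_max_bounds(2,3)[OF assms(1,2)] admissible_op_opnorm_IdL(1)[OF assms(1,3)] by (simp add: k_def)
  have "Inf ((\<lambda>r. supnorm ?I (\<lambda>t. f t - ?F r t)) ` ?R)
      \<le> (1 + k) * Inf ((\<lambda>r. supnorm ?I (\<lambda>t. f t - r t)) ` ?R) + k * supnorm ?I f"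
  proof (rule cInf_image_le_affine)
    show "bdd_below ((\<lambda>r. supnorm ?I (\<lambda>t. f t - ?F r t)) ` ?R)"
    proof (rule bdd_belowI2)
      fix r assume "r \<in> ?R"
      then have "continuous_on ?I (\<lambda>t. f t - ?F r t)"
        using approx(1) assms(4) by (simp add: CI_def continuous_on_diff)
      then show "0 \<le> supnorm ?I (\<lambda>t. f t - ?F r t)" by (rule supnorm_nonneg[OF I(1) _ I(2)])
    qed
    show "?R \<noteq> {}" using zero_in_Rat_fun by blast
    show "0 < 1 + k" using \<open>0 \<le> k\<close> by simp
  qed (rule approx(2))
  then show ?thesis
    by (simp add: dist_set_def Setcompr_eq_image image_comp k_def algebra_simps)
qed

end
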